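(* For $n\geq 4$ and $1\leq i\leq n-3$, \[\frac{n+1}{i+1}\leq \frac{\ell_{i+1}(n)}{\ell_i(n)}\leq \frac{\lceil i/2\rceil - \lfloor i/2\rfloor}{\lceil i/2\rceil} + \frac{n-\lceil i/2\rceil}{\lceil (i+2)/2\rceil}.\]
   Context: For $0\leq i\leq 2n$, $\ell_i(n)$ denotes the number of vectors in $\{0,1,2\}^n$ whose coordinates sum to $i$. *)

theory Defs
  imports Complex_Main "HOL-Library.FuncSet"
begin

definition ell :: "nat \<Rightarrow> nat \<Rightarrow> nat" where
  "ell i n = card {v \<in> {0..<n} \<rightarrow>\<^sub>E {0::nat,1,2}. (\<Sum>k<n. v k) = i}"

end

theory Submission
  imports Defs
begin

(* Choosing the k nonzero coordinates and then which i - k of them equal 2 gives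
   ell i n = sum_k C(n,k) C(k,i-k). Pascal's rule turns ell (i+1) n into the same sum with the
   k-th summand multiplied by r_k = (2k - i)/k + (n - k)/(k + 1), so the ratio ell (i+1) n / ell i n
   is a weighted average of r_k over the support ceil(i/2) <= k <= i. For i <= n - 3 the sequence
   r_k decreases on that range, so the ratio lies between r_i = (n+1)/(i+1) and r_ceil(i/2);
   the latter is the right-hand bound of the theorem, written out. *)

lemma ell_Suc:
  "ell i (Suc n) = (\<Sum>c\<in>{0,1,2}. if c \<le> i then ell (i - c) n else 0)"
proof -
  define V where "V m = {0..<m::nat} \<rightarrow>\<^sub>E {0::nat,1,2}" for m
  define upd where "upd = (\<lambda>(c::nat, g::nat \<Rightarrow> nat). g(n := c))"
  define slice where "slice c = {g \<in> V n. c + (\<Sum>k<n. g k) = i}" for c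
  have V_Suc: "V (Suc n) = upd ` ({0,1,2} \<times> V n)"
    unfolding V_def upd_def atLeast0_lessThan_Suc by (rule PiE_insert_eq)
  have inj: "inj_on upd ({0,1,2} \<times> V n)"
  proof (rule inj_onI, clarify)
    fix c g d h assume gh: "g \<in> V n" "h \<in> V n" and eq: "upd (c, g) = upd (d, h)"
    have "c = d" using fun_cong[OF eq, of n] by (simp add: upd_def)
    moreover have "g = h"
      using gh unfolding V_def
    proof (rule PiE_ext)
      show "g k = h k" if "k \<in> {0..<n}" for k
        using fun_cong[OF eq, of k] that by (simp add: upd_def)
    qed
    ultimately show "c = d \<and> g = h" ..
  qed
  have finite_V: "finite (V m)" for m
    unfolding V_def by (rule finite_PiE) auto
  have sum_upd: "(\<Sum>k<Suc n. upd (c, g) k) = c + (\<Sum>k<n. g k)" for c g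
    unfolding upd_def by simp
  have sub: "(SIGMA c:{0,1,2}. slice c) \<subseteq> {0,1,2} \<times> V n"
    by (auto simp: slice_def)
  have level_Suc: "{v \<in> V (Suc n). (\<Sum>k<Suc n. v k) = i} = upd ` (SIGMA c:{0,1,2}. slice c)"
    unfolding V_Suc slice_def using sum_upd by auto
  have "ell i (Suc n) = card (upd ` (SIGMA c:{0,1,2}. slice c))"
    unfolding ell_def V_def[symmetric] level_Suc ..
  also have "\<dots> = card (SIGMA c:{0,1,2}. slice c)"
    using inj_on_subset[OF inj sub] by (rule card_image)
  also have "\<dots> = (\<Sum>c\<in>{0,1,2}. card (slice c))"
    by (rule card_SigmaI) (auto simp: slice_def finite_V)
  also have "\<dots> = (\<Sum>c\<in>{0,1,2}. if c \<le> i then ell (i - c) n else 0)"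
  proof (rule sum.cong)
    fix c :: nat
    assume "c \<in> {0,1,2}"
    show "card (slice c) = (if c \<le> i then ell (i - c) n else 0)"
    proof (cases "c \<le> i")
      case True
      then have "slice c = {g \<in> V n. (\<Sum>k<n. g k) = i - c}"
        unfolding slice_def by auto
      then show ?thesis using True by (simp add: ell_def V_def)
    next
      case False
      then have "slice c = {}"
        unfolding slice_def by auto
      then show ?thesis using False by simp
    qed
  qed simp
  finally show ?thesis .
qed

definition trinomial :: "nat \<Rightarrow> nat \<Rightarrow> nat" where
  "trinomial n i = (\<Sum>k\<le>i. (n choose k) * (k choose (i - k)))"

lemma trinomial_Suc_Suc:
  "trinomial (Suc n) (Suc (Suc p)) = trinomial n (Suc (Suc p)) + trinomial n (Suc p) + trinomial n p"
proof -
  have shift: "trinomial m (Suc (Suc p)) = (\<Sum>j\<le>Suc p. (m choose Suc j) * (Suc j choose (Suc p - j)))"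
    for m unfolding trinomial_def by (subst sum.atMost_Suc_shift) simp
  have "(\<Sum>j\<le>Suc p. (n choose j) * (Suc j choose (Suc p - j)))
      = (\<Sum>j\<le>p. (n choose j) * (j choose (p - j)) + (n choose j) * (j choose (Suc p - j)))
        + (n choose Suc p)"
    by (simp add: Suc_diff_le algebra_simps)
  also have "\<dots> = trinomial n p + trinomial n (Suc p)"
    unfolding trinomial_def sum.distrib by simp
  finally have "(\<Sum>j\<le>Suc p. (n choose j) * (Suc j choose (Suc p - j))) = trinomial n p + trinomial n (Suc p)" .
  then show ?thesis
    unfolding shift by (simp add: sum.distrib algebra_simps)
qed

lemma trinomial_Suc:
  "trinomial (Suc n) i = (\<Sum>c\<in>{0,1,2}. if c \<le> i then trinomial n (i - c) else 0)"
proof (cases i)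
  case (Suc q)
  then show ?thesis
    by (cases q) (simp_all add: trinomial_Suc_Suc, simp add: trinomial_def)
qed (simp add: trinomial_def)

lemma ell_eq_trinomial: "ell i n = trinomial n i"
proof (induction n arbitrary: i)
  case 0
  have "trinomial 0 i = (if i = 0 then 1 else 0)"
    by (cases i) (auto simp: trinomial_def)
  then show ?case by (simp add: ell_def)
next
  case (Suc n)
  then show ?case by (simp add: ell_Suc trinomial_Suc)
qed

lemma trinomial_Suc_eq_sum:
  assumes "1 \<le> i"
  shows "trinomial n (Suc i)
    = (\<Sum>k\<le>i. (n choose Suc k) * (k choose (i - k)) + (n choose k) * ((k - 1) choose (i - k)))"
proof -
  obtain m where i: "i = Suc m"
    using assms by (cases i) auto
  have pascal: "(Suc k choose (i - k)) = (k choose (i - k)) + (if k < i then k choose (i - Suc k) else 0)"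
    if "k \<le> i" for k
    using that by (cases "k < i") (auto simp flip: Suc_diff_Suc)
  have "trinomial n (Suc i) = (\<Sum>k\<le>i. (n choose Suc k) * (Suc k choose (i - k)))"
    unfolding trinomial_def by (subst sum.atMost_Suc_shift) simp
  also have "\<dots> = (\<Sum>k\<le>i. (n choose Suc k) * (k choose (i - k)))
      + (\<Sum>k\<le>i. if k < i then (n choose Suc k) * (k choose (i - Suc k)) else 0)"
    unfolding sum.distrib[symmetric] by (rule sum.cong) (simp_all add: pascal distrib_left)
  also have "(\<Sum>k\<le>i. if k < i then (n choose Suc k) * (k choose (i - Suc k)) else 0)
      = (\<Sum>k\<le>m. (n choose Suc k) * (k choose (m - k)))"
    unfolding i by (simp add: atMost_Suc)
  also have "(\<Sum>k\<le>m. (n choose Suc k) * (k choose (m - k))) = (\<Sum>k\<le>i. (n choose k) * ((k - 1) choose (i - k)))"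
    unfolding i by (subst sum.atMost_Suc_shift) simp
  finally show ?thesis
    by (simp add: sum.distrib)
qed

lemma choose_Suc_mult: "(n choose Suc k) * Suc k = (n choose k) * (n - k)"
proof (cases n)
  case (Suc m)
  have "Suc k * (Suc m choose Suc k) = Suc m * (m choose k)"
    by (rule Suc_times_binomial)
  moreover have "(Suc m - k) * (Suc m choose k) = Suc m * (m choose k)"
    using binomial_absorb_comp[of "Suc m" k] by simp
  ultimately show ?thesis
    using Suc by (simp add: mult.commute)
qed simp

definition term_ratio :: "nat \<Rightarrow> nat \<Rightarrow> nat \<Rightarrow> real" where
  "term_ratio n i k = (2 * real k - real i) / real k + (real n - real k) / real (k + 1)"

lemma summand_eq_term_ratio:
  assumes "1 \<le> i" "k \<le> i"
  shows "real ((n choose Suc k) * (k choose (i - k)) + (n choose k) * ((k - 1) choose (i - k)))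
       = real ((n choose k) * (k choose (i - k))) * term_ratio n i k"
proof (cases "k \<le> n \<and> i \<le> 2 * k")
  case True
  then have k: "1 \<le> k"
    using assms by auto
  have "real (n choose Suc k) * real (k + 1) = real (n choose k) * (real n - real k)"
    using arg_cong[OF choose_Suc_mult[of n k], of real] True by (simp add: of_nat_diff algebra_simps)
  then have "real (n choose Suc k) = real (n choose k) * ((real n - real k) / real (k + 1))"
    by (simp add: field_simps)
  moreover have "real ((k - 1) choose (i - k)) * real k = real (k choose (i - k)) * (2 * real k - real i)"
    using arg_cong[OF binomial_absorb_comp[of k "i - k"], of real] True assms(2)
    by (simp add: of_nat_diff mult.commute)
  then have "real ((k - 1) choose (i - k)) = real (k choose (i - k)) * ((2 * real k - real i) / real k)"
    using k by (simp add: field_simps)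
  ultimately show ?thesis
    unfolding term_ratio_def by (simp add: algebra_simps)
next
  case False
  then show ?thesis
    by (auto simp: binomial_eq_0 not_le)
qed

lemma ell_Suc_eq_weighted_sum:
  assumes "1 \<le> i"
  shows "real (ell (Suc i) n) = (\<Sum>k\<le>i. real ((n choose k) * (k choose (i - k))) * term_ratio n i k)"
  unfolding ell_eq_trinomial trinomial_Suc_eq_sum[OF assms] of_nat_sum
  using summand_eq_term_ratio[OF assms] by (intro sum.cong) auto

lemma term_ratio_eq_frac:
  assumes "1 \<le> k"
  shows "term_ratio n i k
    = ((2 * real k - real i) * (real k + 1) + (real n - real k) * real k) / (real k * (real k + 1))"
  using assms unfolding term_ratio_def by (simp add: field_simps)

(* The only place where i <= n - 3 is needed: it makes (n + 1 - i) k >= 4 k >= 2 i. *)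
lemma term_ratio_Suc_le:
  assumes "1 \<le> k" "i \<le> 2 * k" "i + 3 \<le> n"
  shows "term_ratio n i (Suc k) \<le> term_ratio n i k"
proof -
  define x a b where "x = real k" and "a = real i" and "b = real n"
  define p where "p y = (2 * y - a) * (y + 1) + (b - y) * y" for y
  have x: "1 \<le> x" "a \<le> 2 * x" "a + 3 \<le> b"
    using assms unfolding x_def a_def b_def by auto
  have "4 * x \<le> (b + 1 - a) * x"
    using x by (intro mult_right_mono) auto
  then have "0 \<le> (x + 1) * ((b + 1) * x - a * (x + 2))"
    using x by (intro mult_nonneg_nonneg) (auto simp: algebra_simps)
  also have "\<dots> = p x * ((x + 1) * (x + 2)) - p (x + 1) * (x * (x + 1))"
    unfolding p_def by (simp add: algebra_simps)
  finally have "p (x + 1) * (x * (x + 1)) - p x * ((x + 1) * (x + 2)) \<le> 0"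
    by simp
  moreover have "0 < (x + 1) * (x + 2) * (x * (x + 1))"
    using x by simp
  ultimately have "p (x + 1) / ((x + 1) * (x + 2)) \<le> p x / (x * (x + 1))"
    using x by (simp add: frac_le_eq divide_nonpos_pos)
  moreover have "term_ratio n i k = p x / (x * (x + 1))"
    unfolding term_ratio_eq_frac[OF assms(1)] p_def x_def a_def b_def ..
  moreover have "term_ratio n i (Suc k) = p (x + 1) / ((x + 1) * (x + 2))"
    unfolding term_ratio_eq_frac[of "Suc k", simplified] p_def x_def a_def b_def
    by (simp add: add.commute add.left_commute)
  ultimately show ?thesis
    by simp
qed

lemma term_ratio_antimono:
  assumes "1 \<le> j" "i \<le> 2 * j" "i + 3 \<le> n" "j \<le> k"
  shows "term_ratio n i k \<le> term_ratio n i j"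
  using \<open>j \<le> k\<close>
proof (induction k rule: dec_induct)
  case (step k)
  have "term_ratio n i (Suc k) \<le> term_ratio n i k"
    using assms step.hyps by (intro term_ratio_Suc_le) auto
  with step.IH show ?case by simp
qed simp

lemma term_ratio_diagonal:
  assumes "1 \<le> i"
  shows "term_ratio n i i = (real n + 1) / (real i + 1)"
  using assms unfolding term_ratio_def by (simp add: field_simps)

lemma weighted_sum_bounds:
  fixes w f :: "'a \<Rightarrow> 'b::linordered_idom"
  assumes "\<And>k. k \<in> A \<Longrightarrow> 0 \<le> w k"
    and "\<And>k. k \<in> A \<Longrightarrow> w k \<noteq> 0 \<Longrightarrow> a \<le> f k \<and> f k \<le> b"
  shows "a * sum w A \<le> (\<Sum>k\<in>A. w k * f k)" and "(\<Sum>k\<in>A. w k * f k) \<le> b * sum w A"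
proof -
  have "a * w k \<le> w k * f k \<and> w k * f k \<le> b * w k" if "k \<in> A" for k
    using assms that by (cases "w k = 0") (auto simp: mult.commute mult_right_mono)
  then show "a * sum w A \<le> (\<Sum>k\<in>A. w k * f k)" and "(\<Sum>k\<in>A. w k * f k) \<le> b * sum w A"
    unfolding sum_distrib_left by (auto intro!: sum_mono)
qed

lemma ell_Suc_bounds:
  assumes "1 \<le> i" "i + 3 \<le> n"
  shows "(real n + 1) / (real i + 1) * real (ell i n) \<le> real (ell (Suc i) n)"
    and "real (ell (Suc i) n) \<le> term_ratio n i ((i + 1) div 2) * real (ell i n)"
proof -
  let ?w = "\<lambda>k. real ((n choose k) * (k choose (i - k)))"
  have ell: "real (ell i n) = sum ?w {..i}"
    unfolding ell_eq_trinomial trinomial_def of_nat_sum ..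
  have bounds: "(real n + 1) / (real i + 1) \<le> term_ratio n i k \<and> term_ratio n i k \<le> term_ratio n i ((i + 1) div 2)"
    if "k \<in> {..i}" "?w k \<noteq> 0" for k
  proof -
    have k: "k \<le> i" "i \<le> 2 * k"
      using that by (auto simp: binomial_eq_0_iff)
    then have "term_ratio n i i \<le> term_ratio n i k"
      using assms by (intro term_ratio_antimono) auto
    moreover have "term_ratio n i k \<le> term_ratio n i ((i + 1) div 2)"
      using assms k by (intro term_ratio_antimono) auto
    ultimately show ?thesis
      using term_ratio_diagonal[OF assms(1)] by simp
  qed
  show "(real n + 1) / (real i + 1) * real (ell i n) \<le> real (ell (Suc i) n)"
    unfolding ell ell_Suc_eq_weighted_sum[OF assms(1)] by (rule weighted_sum_bounds[OF _ bounds]) simp_all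
  show "real (ell (Suc i) n) \<le> term_ratio n i ((i + 1) div 2) * real (ell i n)"
    unfolding ell ell_Suc_eq_weighted_sum[OF assms(1)] by (rule weighted_sum_bounds[OF _ bounds]) simp_all
qed

lemma ell_pos:
  assumes "i \<le> 2 * n"
  shows "0 < ell i n"
proof -
  let ?k = "(i + 1) div 2"
  have "?k \<le> n" "i - ?k \<le> ?k"
    using assms by linarith+
  then have "0 < (n choose ?k) * (?k choose (i - ?k))"
    by simp
  then show ?thesis
    unfolding ell_eq_trinomial trinomial_def
    by (intro sum_pos2[where i = ?k]) auto
qed

lemma ceiling_half: "\<lceil>real i / 2\<rceil> = int ((i + 1) div 2)"
  by (rule ceiling_unique) linarith+

lemma floor_half: "\<lfloor>real i / 2\<rfloor> = int (i div 2)"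
  using floor_divide_of_nat_eq[of i 2] by simp

lemma term_ratio_ceiling_half:
  "term_ratio n i ((i + 1) div 2)
    = real_of_int (\<lceil>real i / 2\<rceil> - \<lfloor>real i / 2\<rfloor>) / real_of_int \<lceil>real i / 2\<rceil>
      + (real n - real_of_int \<lceil>real i / 2\<rceil>) / real_of_int \<lceil>real (i + 2) / 2\<rceil>"
proof -
  let ?c = "(i + 1) div 2"
  have "i div 2 + ?c = i"
    by presburger
  then have "real (i div 2) = real i - real ?c"
    by (metis add_diff_cancel_right' of_nat_add)
  moreover have "\<lceil>real (i + 2) / 2\<rceil> = int ?c + 1"
    using ceiling_half[of "i + 2"] by simp
  ultimately show ?thesis
    unfolding term_ratio_def ceiling_half floor_half by simp
qed

theorem mainTheorem15:
  fixes n i :: nat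
  assumes "n \<ge> 4" and "1 \<le> i" and "i \<le> n - 3"
  shows "real (n + 1) / real (i + 1) \<le> real (ell (i + 1) n) / real (ell i n)
    \<and> real (ell (i + 1) n) / real (ell i n)
        \<le> real_of_int (\<lceil>real i / 2\<rceil> - \<lfloor>real i / 2\<rfloor>) / real_of_int \<lceil>real i / 2\<rceil>
          + (real n - real_of_int \<lceil>real i / 2\<rceil>) / real_of_int \<lceil>real (i + 2) / 2\<rceil>"
proof -
  have i: "1 \<le> i" "i + 3 \<le> n"
    using assms by auto
  have "0 < real (ell i n)"
    using ell_pos[of i n] i by simp
  then show ?thesis
    using ell_Suc_bounds[OF i] unfolding term_ratio_ceiling_half
    by (simp add: pos_le_divide_eq pos_divide_le_eq add.commute)
qed

end
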